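(* Let $m$ and $n$ be positive integers. Then $$\frac{1-q}{1-q^{m+n}}{m+n-2\brack m-1}_q{n\brack m}_q{2n\brack n}_q$$ is a polynomial in $q$ with non-negative integer coefficients.
   Context: The $q$-binomial coefficients are defined by ${n\brack k}_q=\prod_{i=1}^{k}\frac{1-q^{n-k+i}}{1-q^i}$ if $0\le k\le n$, and ${n\brack k}_q=0$ otherwise. *)

theory Defs
  imports Complex_Main "HOL-Computational_Algebra.Polynomial"
begin

definition qbinom :: "nat \<Rightarrow> nat \<Rightarrow> 'a::field \<Rightarrow> 'a" where
  "qbinom n k q = (if k \<le> n then (\<Prod>i=1..k. (1 - q ^ (n - k + i)) / (1 - q ^ i)) else 0)"

end

theory Submission
  imports Defs
begin

(* By q-trinomial revision, [n,m][2n,n] = [2n,n-m][m+n,m], and after cancelling q-factorials the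
   expression becomes [2n,n-m] times the determinant
     D = [m+n-2,n-1]^2 - q [m+n-2,n-2] [m+n-2,n].
   Writing D_c(a,b) = [a+c,c][b+c,c] - q [a+c,c-1][b+c,c+1], so that D = D_{n-1}(m-1,m-1),
   the q-Pascal rule and q-hockey-stick summation give, for b <= a,
     D_{c+1}(a,b) = sum_{x<=a} sum_{y<=min x b} q^(x+y) D_c(x,y),   D_0(a,b) = 1,
   a recursion with manifestly nonnegative coefficients. The q-Pascal rule does the same for
   [2n,n-m]. *)

fun gauss_binom :: "nat \<Rightarrow> nat \<Rightarrow> 'a::comm_semiring_1 \<Rightarrow> 'a" where
  "gauss_binom n 0 q = 1"
| "gauss_binom 0 (Suc k) q = 0"
| "gauss_binom (Suc n) (Suc k) q = q ^ (n - k) * gauss_binom n k q + gauss_binom n (Suc k) q"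

lemma gauss_binom_eq_0: "n < k \<Longrightarrow> gauss_binom n k q = 0"
  by (induction n k q rule: gauss_binom.induct) auto

lemma gauss_binom_diag [simp]: "gauss_binom n n q = 1"
  by (induction n) (auto simp: gauss_binom_eq_0)

lemma gauss_binom_pascal:
  "gauss_binom (a + c + 1) (c + 1) q = q ^ a * gauss_binom (a + c) c q + gauss_binom (a + c) (c + 1) q"
  using gauss_binom.simps(3)[of "a + c" c q] by simp

definition qfact :: "nat \<Rightarrow> 'a::comm_ring_1 \<Rightarrow> 'a" where
  "qfact n q = (\<Prod>i=1..n. 1 - q ^ i)"

lemma qfact_0 [simp]: "qfact 0 q = 1"
  by (simp add: qfact_def)

lemma qfact_Suc: "qfact (Suc n) q = qfact n q * (1 - q ^ Suc n)"
  by (simp add: qfact_def prod.cl_ivl_Suc)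

lemma qfact_add: "qfact (j + k) q = qfact j q * (\<Prod>i=1..k. 1 - q ^ (j + i))"
  by (induction k) (simp_all add: qfact_def prod.cl_ivl_Suc)

lemma gauss_binom_qfact:
  "k \<le> n \<Longrightarrow> gauss_binom n k q * qfact k q * qfact (n - k) q = qfact n q"
proof (induction n k q rule: gauss_binom.induct)
  case (3 n k q)
  show ?case
  proof (cases "k = n")
    case True
    then show ?thesis by (simp add: gauss_binom_eq_0 qfact_Suc)
  next
    case False
    with "3.prems" obtain u where n: "n = k + Suc u"
      by (metis Suc_le_mono add_Suc_right le_neq_implies_less less_imp_Suc_add)
    have IH1: "gauss_binom n k q * qfact k q * qfact (Suc u) q = qfact n q"
      using "3.IH"(1) n by simp
    have IH2: "gauss_binom n (Suc k) q * qfact (Suc k) q * qfact u q = qfact n q"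
      using "3.IH"(2) n by simp
    have "gauss_binom (Suc n) (Suc k) q * qfact (Suc k) q * qfact (Suc n - Suc k) q
        = (q ^ Suc u * gauss_binom n k q + gauss_binom n (Suc k) q) * qfact (Suc k) q * qfact (Suc u) q"
      using n by simp
    also have "\<dots> = q ^ Suc u * (1 - q ^ Suc k) * (gauss_binom n k q * qfact k q * qfact (Suc u) q)
          + (1 - q ^ Suc u) * (gauss_binom n (Suc k) q * qfact (Suc k) q * qfact u q)"
      by (simp only: qfact_Suc[of k] qfact_Suc[of u]) (simp add: algebra_simps)
    also have "\<dots> = qfact n q * (1 - q ^ Suc n)"
      unfolding IH1 IH2 by (simp add: n algebra_simps power_add)
    finally show ?thesis by (simp add: qfact_Suc)
  qed
qed simp_all

(* [n, c - 1] with [n, -1] = 0; truncated subtraction alone would give [n, 0] = 1 at c = 0. *)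
definition gauss_binom_pred :: "nat \<Rightarrow> nat \<Rightarrow> 'a::comm_semiring_1 \<Rightarrow> 'a" where
  "gauss_binom_pred n c q = (if c = 0 then 0 else gauss_binom n (c - 1) q)"

lemma gauss_binom_pred_pascal:
  "gauss_binom (a + c + 1) c q = q ^ (a + 1) * gauss_binom_pred (a + c) c q + gauss_binom (a + c) c q"
  using gauss_binom_pascal[of "a + 1" "c - 1" q]
  by (cases c) (simp_all add: gauss_binom_pred_def)

lemma gauss_binom_hockey_stick:
  "(\<Sum>y=0..b. q ^ y * gauss_binom (y + c) c q) = gauss_binom (b + c + 1) (c + 1) q"
proof (induction b)
  case (Suc b)
  then show ?case using gauss_binom_pascal[of "Suc b" c q] by (simp add: ac_simps)
qed simp

lemma gauss_binom_hockey_stick_Suc: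
  "(\<Sum>y=0..b. q ^ y * gauss_binom (y + c) (c + 1) q) = q * gauss_binom (b + c + 1) (c + 2) q"
proof (induction b)
  case 0
  then show ?case by (simp add: gauss_binom_eq_0)
next
  case (Suc b)
  then show ?case using gauss_binom_pascal[of b "c + 1" q] by (simp add: algebra_simps)
qed

definition gauss_det :: "nat \<Rightarrow> nat \<Rightarrow> nat \<Rightarrow> 'a::comm_ring_1 \<Rightarrow> 'a" where
  "gauss_det c a b q = gauss_binom (a + c) c q * gauss_binom (b + c) c q
     - q * gauss_binom_pred (a + c) c q * gauss_binom (b + c) (c + 1) q"

lemma sum_gauss_det:
  "(\<Sum>y=0..b. q ^ y * gauss_det c a y q) =
     gauss_binom (a + c) c q * gauss_binom (b + c + 1) (c + 1) q
     - q * gauss_binom_pred (a + c) c q * (q * gauss_binom (b + c + 1) (c + 2) q)"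
proof -
  have "(\<Sum>y=0..b. q ^ y * gauss_det c a y q)
      = gauss_binom (a + c) c q * (\<Sum>y=0..b. q ^ y * gauss_binom (y + c) c q)
        - q * gauss_binom_pred (a + c) c q * (\<Sum>y=0..b. q ^ y * gauss_binom (y + c) (c + 1) q)"
    by (simp add: gauss_det_def sum_distrib_left sum_subtractf algebra_simps)
  then show ?thesis
    by (simp only: gauss_binom_hockey_stick gauss_binom_hockey_stick_Suc)
qed

lemma gauss_det_Suc_diff:
  "gauss_det (Suc c) (Suc a) b q - gauss_det (Suc c) a b q
     = q ^ Suc a * (\<Sum>y=0..b. q ^ y * gauss_det c (Suc a) y q)"
proof -
  have "gauss_binom (Suc a + Suc c) (Suc c) q
      = q ^ Suc a * gauss_binom (Suc a + c) c q + gauss_binom (a + Suc c) (Suc c) q"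
    using gauss_binom_pascal[of "Suc a" c q] by (simp del: gauss_binom.simps)
  moreover have "gauss_binom_pred (Suc a + Suc c) (Suc c) q
      = q ^ Suc (Suc a) * gauss_binom_pred (Suc a + c) c q + gauss_binom_pred (a + Suc c) (Suc c) q"
    using gauss_binom_pred_pascal[of "Suc a" c q] by (simp add: gauss_binom_pred_def del: gauss_binom.simps)
  ultimately show ?thesis
    unfolding sum_gauss_det by (simp add: gauss_det_def algebra_simps del: gauss_binom.simps)
qed

lemma gauss_det_Suc_off_diag: "gauss_det (Suc c) a (Suc a) q = gauss_det (Suc c) a a q"
proof -
  have "gauss_binom (Suc a + Suc c) (Suc c) q
      = q ^ Suc a * gauss_binom (a + Suc c) c q + gauss_binom (a + Suc c) (Suc c) q"
    using gauss_binom_pascal[of "Suc a" c q] by (simp del: gauss_binom.simps)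
  moreover have "gauss_binom (Suc a + Suc c) (Suc (Suc c)) q
      = q ^ a * gauss_binom (a + Suc c) (Suc c) q + gauss_binom (a + Suc c) (Suc (Suc c)) q"
    using gauss_binom_pascal[of a "Suc c" q] by (simp del: gauss_binom.simps)
  ultimately show ?thesis
    unfolding gauss_det_def gauss_binom_pred_def by (simp del: gauss_binom.simps add: algebra_simps)
qed

fun gauss_det_sum :: "nat \<Rightarrow> nat \<Rightarrow> nat \<Rightarrow> 'a::comm_semiring_1 \<Rightarrow> 'a" where
  "gauss_det_sum 0 a b q = 1"
| "gauss_det_sum (Suc c) a b q = (\<Sum>x=0..a. \<Sum>y=0..min x b. q ^ (x + y) * gauss_det_sum c x y q)"

lemma sum_gauss_det_eq_gauss_det_Suc:
  "b \<le> a \<Longrightarrow>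
    (\<Sum>x=0..a. \<Sum>y=0..min x b. q ^ (x + y) * gauss_det c x y q) = gauss_det (Suc c) a b q"
proof (induction a arbitrary: b)
  case 0
  then show ?case by (simp add: gauss_det_def gauss_binom_pred_def gauss_binom_eq_0 del: gauss_binom.simps)
next
  case (Suc a)
  have "(\<Sum>x=0..Suc a. \<Sum>y=0..min x b. q ^ (x + y) * gauss_det c x y q)
     = (\<Sum>x=0..a. \<Sum>y=0..min x (min b a). q ^ (x + y) * gauss_det c x y q)
       + q ^ Suc a * (\<Sum>y=0..b. q ^ y * gauss_det c (Suc a) y q)"
    using Suc.prems by (simp add: sum_distrib_left power_add mult_ac min_def)
  also have "(\<Sum>x=0..a. \<Sum>y=0..min x (min b a). q ^ (x + y) * gauss_det c x y q)
      = gauss_det (Suc c) a b q"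
    using Suc.IH[of "min b a"] Suc.prems gauss_det_Suc_off_diag[of c a q]
    by (cases "b \<le> a") (simp_all add: min_def le_Suc_eq)
  finally show ?case
    using gauss_det_Suc_diff[of c a b q] by (simp add: algebra_simps)
qed

lemma gauss_det_sum_eq_gauss_det: "b \<le> a \<Longrightarrow> gauss_det_sum c a b q = gauss_det c a b q"
proof (induction c arbitrary: a b)
  case 0
  then show ?case by (simp add: gauss_det_def gauss_binom_pred_def)
next
  case (Suc c)
  then have "gauss_det_sum (Suc c) a b q = (\<Sum>x=0..a. \<Sum>y=0..min x b. q ^ (x + y) * gauss_det c x y q)"
    by (auto intro!: sum.cong)
  with Suc.prems show ?case
    by (simp only: sum_gauss_det_eq_gauss_det_Suc)
qed

definition nat_poly_fun :: "(real \<Rightarrow> real) \<Rightarrow> bool" where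
  "nat_poly_fun f \<longleftrightarrow> (\<exists>p :: nat poly. \<forall>q. f q = poly (map_poly real p) q)"

lemma map_poly_of_nat_add:
  "map_poly (of_nat :: nat \<Rightarrow> 'a::semiring_1) (p + r) = map_poly of_nat p + map_poly of_nat r"
  by (rule poly_eqI) (simp add: coeff_map_poly)

lemma map_poly_of_nat_mult:
  "map_poly (of_nat :: nat \<Rightarrow> 'a::comm_semiring_1) (p * r) = map_poly of_nat p * map_poly of_nat r"
  by (rule poly_eqI) (simp add: coeff_map_poly coeff_mult)

lemma nat_poly_fun_0: "nat_poly_fun (\<lambda>q. 0)"
  unfolding nat_poly_fun_def by (rule exI[of _ 0]) simp

lemma nat_poly_fun_1: "nat_poly_fun (\<lambda>q. 1)"
  unfolding nat_poly_fun_def by (rule exI[of _ 1]) simp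

lemma nat_poly_fun_power: "nat_poly_fun (\<lambda>q. q ^ k)"
  unfolding nat_poly_fun_def by (rule exI[of _ "monom 1 k"]) (simp add: map_poly_monom poly_monom)

lemma nat_poly_fun_add:
  "nat_poly_fun f \<Longrightarrow> nat_poly_fun g \<Longrightarrow> nat_poly_fun (\<lambda>q. f q + g q)"
  unfolding nat_poly_fun_def by (metis map_poly_of_nat_add poly_add)

lemma nat_poly_fun_mult:
  "nat_poly_fun f \<Longrightarrow> nat_poly_fun g \<Longrightarrow> nat_poly_fun (\<lambda>q. f q * g q)"
  unfolding nat_poly_fun_def by (metis map_poly_of_nat_mult poly_mult)

lemma nat_poly_fun_sum:
  "finite A \<Longrightarrow> (\<And>x. x \<in> A \<Longrightarrow> nat_poly_fun (f x)) \<Longrightarrow>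
    nat_poly_fun (\<lambda>q. \<Sum>x\<in>A. f x q)"
  by (induction A rule: finite_induct) (simp_all add: nat_poly_fun_0 nat_poly_fun_add)

lemma nat_poly_fun_gauss_binom: "nat_poly_fun (gauss_binom n k)"
proof (induction n arbitrary: k)
  case 0
  then show ?case
    by (cases k) (simp_all add: gauss_binom.simps[abs_def] nat_poly_fun_0 nat_poly_fun_1)
next
  case (Suc n)
  then show ?case
    by (cases k) (simp_all add: gauss_binom.simps[abs_def] nat_poly_fun_1 nat_poly_fun_add
        nat_poly_fun_mult nat_poly_fun_power)
qed

lemma nat_poly_fun_gauss_det_sum: "nat_poly_fun (gauss_det_sum c a b)"
proof (induction c arbitrary: a b)
  case 0
  then show ?case by (simp add: gauss_det_sum.simps[abs_def] nat_poly_fun_1)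
next
  case (Suc c)
  then show ?case
    by (simp add: gauss_det_sum.simps[abs_def] nat_poly_fun_sum nat_poly_fun_mult nat_poly_fun_power)
qed

context
  fixes q :: "'a::field"
  assumes not_root_of_unity: "\<And>i. 0 < i \<Longrightarrow> q ^ i \<noteq> 1"
begin

lemma one_minus_power_nonzero: "0 < i \<Longrightarrow> 1 - q ^ i \<noteq> 0"
  using not_root_of_unity by simp

lemma qfact_nonzero: "qfact n q \<noteq> 0"
  using one_minus_power_nonzero by (simp add: qfact_def)

lemma gauss_binom_eq_div:
  "k \<le> n \<Longrightarrow> gauss_binom n k q = qfact n q / (qfact k q * qfact (n - k) q)"
  using gauss_binom_qfact[of k n q] qfact_nonzero by (simp add: field_simps)

lemma qbinom_eq_gauss_binom: "qbinom n k q = gauss_binom n k q"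
proof (cases "k \<le> n")
  case True
  have "qfact n q = qfact (n - k) q * (\<Prod>i=1..k. 1 - q ^ (n - k + i))"
    using qfact_add[of "n - k" k q] True by simp
  then have "(\<Prod>i=1..k. 1 - q ^ (n - k + i)) = qfact n q / qfact (n - k) q"
    using qfact_nonzero by (simp add: field_simps)
  moreover have "qbinom n k q = (\<Prod>i=1..k. 1 - q ^ (n - k + i)) / qfact k q"
    using True by (simp add: qbinom_def qfact_def prod_dividef)
  ultimately show ?thesis
    using True by (simp add: gauss_binom_eq_div mult.commute)
qed (simp add: qbinom_def gauss_binom_eq_0)

lemma gauss_binom_symmetric: "k \<le> n \<Longrightarrow> gauss_binom n (n - k) q = gauss_binom n k q"
  by (simp add: gauss_binom_eq_div mult.commute)

lemma gauss_binom_trinomial_revision: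
  assumes "c \<le> b" "b \<le> a"
  shows "gauss_binom a b q * gauss_binom b c q = gauss_binom a (b - c) q * gauss_binom (a - b + c) c q"
proof -
  define f where "f = qfact c q * qfact (b - c) q * qfact (a - b) q"
  have "gauss_binom a b q * gauss_binom b c q * f
      = gauss_binom a b q * (gauss_binom b c q * qfact c q * qfact (b - c) q) * qfact (a - b) q"
    by (simp add: f_def ac_simps)
  also have "\<dots> = qfact a q"
    using gauss_binom_qfact[of c b q] gauss_binom_qfact[of b a q] assms by (simp add: ac_simps)
  finally have lhs: "gauss_binom a b q * gauss_binom b c q * f = qfact a q" .
  have "gauss_binom a (b - c) q * gauss_binom (a - b + c) c q * f
      = gauss_binom a (b - c) q * (gauss_binom (a - b + c) c q * qfact c q * qfact (a - b + c - c) q)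
        * qfact (b - c) q"
    by (simp add: f_def ac_simps)
  also have "\<dots> = qfact a q"
    using gauss_binom_qfact[of c "a - b + c" q] gauss_binom_qfact[of "b - c" a q] assms
    by (simp add: ac_simps)
  finally show ?thesis
    using lhs qfact_nonzero by (metis f_def mult_eq_0_iff mult_right_cancel)
qed

lemma gauss_binom_Suc_ratio:
  "gauss_binom n (Suc k) q * (1 - q ^ Suc k) = gauss_binom n k q * (1 - q ^ (n - k))"
proof (cases "k < n")
  case True
  have "qfact (n - k) q = qfact (n - Suc k) q * (1 - q ^ (n - k))"
    using qfact_Suc[of "n - Suc k" q] Suc_diff_Suc[OF True] by simp
  then have "gauss_binom n k q * (1 - q ^ (n - k)) * (qfact k q * qfact (n - Suc k) q) = qfact n q"
    using gauss_binom_qfact[of k n q] True by (simp add: ac_simps)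
  moreover have "gauss_binom n (Suc k) q * (1 - q ^ Suc k) * (qfact k q * qfact (n - Suc k) q)
      = qfact n q"
    using gauss_binom_qfact[of "Suc k" n q] True by (simp add: qfact_Suc ac_simps)
  ultimately show ?thesis
    using qfact_nonzero by (metis mult_eq_0_iff mult_right_cancel)
qed (simp add: gauss_binom_eq_0)

lemma gauss_binom_add_2:
  "gauss_binom (a + c + 2) (a + 1) q * ((1 - q ^ (a + 1)) * (1 - q ^ (c + 1)))
     = gauss_binom (a + c) a q * ((1 - q ^ (a + c + 1)) * (1 - q ^ (a + c + 2)))"
proof -
  have "gauss_binom (a + c + 2) (a + 1) q * ((1 - q ^ (a + 1)) * (1 - q ^ (c + 1)))
      * (qfact a q * qfact c q) = qfact (a + c + 2) q"
    using gauss_binom_qfact[of "a + 1" "a + c + 2" q] by (simp add: qfact_Suc ac_simps)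
  moreover have "gauss_binom (a + c) a q * ((1 - q ^ (a + c + 1)) * (1 - q ^ (a + c + 2)))
      * (qfact a q * qfact c q) = qfact (a + c + 2) q"
    using gauss_binom_qfact[of a "a + c" q] by (simp add: qfact_Suc ac_simps)
  ultimately show ?thesis
    using qfact_nonzero by (metis mult_eq_0_iff mult_right_cancel)
qed

lemma gauss_det_diag:
  "(1 - q ^ (a + 1)) * (1 - q ^ (c + 1)) * gauss_det c a a q
     = (1 - q) * (1 - q ^ (a + c + 1)) * gauss_binom (a + c) a q ^ 2"
proof (cases c)
  case 0
  then show ?thesis
    by (simp add: gauss_det_def gauss_binom_pred_def algebra_simps)
next
  case (Suc d)
  define G u v where "G = gauss_binom (a + c) a q" and "u = 1 - q ^ (a + 1)" and "v = 1 - q ^ (c + 1)"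
  have sym: "gauss_binom (a + c) c q = G"
    using gauss_binom_symmetric[of a "a + c"] by (simp add: G_def)
  have above: "gauss_binom (a + c) (c + 1) q * v = G * (1 - q ^ a)"
    using gauss_binom_Suc_ratio[of "a + c" c] sym by (simp add: v_def)
  have below: "gauss_binom (a + c) d q * u = G * (1 - q ^ c)"
    using gauss_binom_Suc_ratio[of "a + c" d] sym Suc by (simp add: u_def)
  have det: "gauss_det c a a q = G * G - q * gauss_binom (a + c) d q * gauss_binom (a + c) (c + 1) q"
    using sym Suc by (simp add: gauss_det_def gauss_binom_pred_def)
  have "u * v * gauss_det c a a q
      = G * G * (u * v) - q * (gauss_binom (a + c) d q * u) * (gauss_binom (a + c) (c + 1) q * v)"
    unfolding det by (simp add: algebra_simps)
  also have "\<dots> = G * G * (u * v - q * (1 - q ^ c) * (1 - q ^ a))"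
    unfolding above below by (simp add: algebra_simps)
  also have "u * v - q * (1 - q ^ c) * (1 - q ^ a) = (1 - q) * (1 - q ^ (a + c + 1))"
    by (simp add: u_def v_def algebra_simps power_add)
  finally show ?thesis
    by (simp add: G_def u_def v_def power2_eq_square ac_simps)
qed

lemma gauss_det_diag_closed_form:
  "(1 - q ^ (a + c + 2)) * gauss_det c a a q
     = (1 - q) * gauss_binom (a + c) a q * gauss_binom (a + c + 2) (a + 1) q"
proof -
  define u v where "u = 1 - q ^ (a + 1)" and "v = 1 - q ^ (c + 1)"
  have "u * v * ((1 - q ^ (a + c + 2)) * gauss_det c a a q)
      = (1 - q) * gauss_binom (a + c) a q
        * (gauss_binom (a + c) a q * ((1 - q ^ (a + c + 1)) * (1 - q ^ (a + c + 2))))"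
    using gauss_det_diag[of a c] by (simp add: u_def v_def power2_eq_square ac_simps)
  also have "\<dots> = u * v * ((1 - q) * gauss_binom (a + c) a q * gauss_binom (a + c + 2) (a + 1) q)"
    using gauss_binom_add_2[of a c] by (simp add: u_def v_def ac_simps)
  finally show ?thesis
    using one_minus_power_nonzero[of "a + 1"] one_minus_power_nonzero[of "c + 1"]
    by (simp add: u_def v_def)
qed

lemma qbinom_product_eq_gauss_det:
  assumes "1 \<le> m" "m \<le> n"
  shows "(1 - q) / (1 - q ^ (m + n)) * qbinom (m + n - 2) (m - 1) q * qbinom n m q * qbinom (2 * n) n q
    = gauss_binom (2 * n) (n - m) q * gauss_det (n - 1) (m - 1) (m - 1) q"
proof -
  define a c where "a = m - 1" and "c = n - 1"
  have mn: "m = a + 1" "m + n = a + c + 2" "m + n - 2 = a + c" "2 * n - n + m = a + c + 2"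
    using assms by (simp_all add: a_def c_def)
  have "qbinom (2 * n) n q * qbinom n m q = gauss_binom (2 * n) n q * gauss_binom n m q"
    by (simp only: qbinom_eq_gauss_binom)
  also have "\<dots> = gauss_binom (2 * n) (n - m) q * gauss_binom (2 * n - n + m) m q"
    using assms by (intro gauss_binom_trinomial_revision) simp_all
  also have "\<dots> = gauss_binom (2 * n) (n - m) q * gauss_binom (a + c + 2) (a + 1) q"
    unfolding mn(4) by (simp only: mn(1))
  finally have revision: "qbinom (2 * n) n q * qbinom n m q
      = gauss_binom (2 * n) (n - m) q * gauss_binom (a + c + 2) (a + 1) q" .
  have "1 - q ^ (a + c + 2) \<noteq> 0"
    using one_minus_power_nonzero[of "a + c + 2"] by simp
  then have "gauss_det c a a q
      = (1 - q) / (1 - q ^ (a + c + 2)) * gauss_binom (a + c) a q * gauss_binom (a + c + 2) (a + 1) q"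
    using gauss_det_diag_closed_form[of a c] by (simp add: field_simps)
  then show ?thesis
    using revision mn(2,3) unfolding a_def[symmetric] c_def[symmetric]
    by (simp add: qbinom_eq_gauss_binom ac_simps del: gauss_binom.simps)
qed

end

lemma abs_ne_1_imp_power_ne_1: "\<bar>q :: real\<bar> \<noteq> 1 \<Longrightarrow> 0 < i \<Longrightarrow> q ^ i \<noteq> 1"
  using power_eq_1_iff[of q i] by auto

theorem theorem3:
  fixes m n :: nat
  assumes "m \<ge> 1" and "n \<ge> 1"
  shows "\<exists>p :: nat poly. \<forall>q :: real. \<bar>q\<bar> \<noteq> 1 \<longrightarrow>
           (1 - q) / (1 - q ^ (m + n)) * qbinom (m + n - 2) (m - 1) q * qbinom n m q * qbinom (2 * n) n q
           = poly (map_poly real p) q"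
proof (cases "m \<le> n")
  case False
  then show ?thesis
    by (intro exI[of _ 0]) (simp add: qbinom_def)
next
  case True
  obtain p :: "nat poly" where p: "\<And>q. gauss_binom (2 * n) (n - m) q
      * gauss_det_sum (n - 1) (m - 1) (m - 1) q = poly (map_poly real p) q"
    using nat_poly_fun_mult[OF nat_poly_fun_gauss_binom nat_poly_fun_gauss_det_sum]
    unfolding nat_poly_fun_def by blast
  have "(1 - q) / (1 - q ^ (m + n)) * qbinom (m + n - 2) (m - 1) q * qbinom n m q * qbinom (2 * n) n q
      = poly (map_poly real p) q" if "\<bar>q\<bar> \<noteq> 1" for q :: real
    using qbinom_product_eq_gauss_det[OF abs_ne_1_imp_power_ne_1[OF that] assms(1) True]
      gauss_det_sum_eq_gauss_det[of "m - 1" "m - 1" "n - 1" q] p[of q]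
    by simp
  then show ?thesis
    by blast
qed

end
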